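(* Under the standing assumptions below, for a single consensus instance $\mathsf{swid}$, any two commit certificates $\mathsf{cert}[\mathsf{Commit}(P_1)]$ and $\mathsf{cert}[\mathsf{Commit}(P_2)]$ for proposals $P_1,P_2$ of $\mathsf{swid}$ satisfy $\mathsf{decision}(P_1)=\mathsf{decision}(P_2)$.
   Context: Setting. There is a fixed finite set of authorities, some of which are honest and the rest arbitrary (Byzantine). A \emph{quorum} is a set of authorities of a fixed size (e.g. $2f+1$ out of $n=3f+1$ with at most $f$ dishonest), such that any two quorums intersect in at least one honest authority. For a message $M$, a \emph{certificate} $\mathsf{cert}[M]$ exists only if every authority of some quorum has signed (voted for) $M$. Data. A decision value is either $\mathsf{Confirm}$ or $\mathsf{Abort}$. A \emph{proposal} is a message $P = \mathsf{Proposal}(\mathsf{swid}, k, V)$ with round number $k \in \mathbb{N}$ and decision value $V$; write $\mathsf{round}(P)=k$, $\mathsf{decision}(P)=V$. A \emph{pre-commit certificate} is $C=\mathsf{cert}[\mathsf{PreCommit}(P)]$ and a \emph{commit certificate} is $C^*=\mathsf{cert}[\mathsf{Commit}(P)]$; $\mathsf{round}$ and $\mathsf{decision}$ of such certificates are those of $P$. Honest behavior. Each honest authority $\alpha$ keeps, for the instance $\mathsf{swid}$, two fields $\mathsf{proposed}(\alpha)$ (initially $\bot$, later a proposal) and $\mathsf{locked}(\alpha)$ (initially $\bot$, later a pre-commit certificate), which change only as follows. (i) $\alpha$ signs $\mathsf{PreCommit}(P)$ only if at that moment $P$ is \emph{safe}: (a) if $\mathsf{proposed}(\alpha)=P_0\neq\bot$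 and $P\ne P_0$ then $\mathsf{round}(P)>\mathsf{round}(P_0)$; and (b) if $\mathsf{locked}(\alpha)=C_0\neq\bot$ then $\mathsf{round}(P)>\mathsf{round}(C_0)$ and $\mathsf{decision}(P)=\mathsf{decision}(C_0)$; upon signing it sets $\mathsf{proposed}(\alpha):=P$. (ii) $\alpha$ signs $\mathsf{Commit}(P)$ only upon receiving a valid pre-commit certificate $C=\mathsf{cert}[\mathsf{PreCommit}(P)]$ that is \emph{safe} at that moment: (c) if $\mathsf{proposed}(\alpha)=P_0\neq\bot$ then $\mathsf{round}(C)\ge\mathsf{round}(P_0)$; and (d) if $\mathsf{locked}(\alpha)=C_0\neq\bot$ then $\mathsf{round}(C)\ge\mathsf{round}(C_0)$; upon signing it sets $\mathsf{locked}(\alpha):=C$. In particular, an honest authority signs $\mathsf{Commit}(P)$ only if a certificate $\mathsf{cert}[\mathsf{PreCommit}(P)]$ exists. *)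

theory Defs
  imports Main
begin

datatype decision = Confirm | Abort

datatype 's proposal = Proposal (swid: 's) (round: nat) (decision: decision)

datatype 's msg = PreCommit "'s proposal" | Commit "'s proposal"

text \<open>A locked pre-commit certificate
  cert[PreCommit(P)] is represented by the proposal P it certifies (its round and decision
  are those of P).\<close>
record ('a, 's) state =
  votes :: "('a \<times> 's msg) set"
  proposed :: "'a \<Rightarrow> 's proposal option"
  locked :: "'a \<Rightarrow> 's proposal option"

definition cert :: "'a set set \<Rightarrow> ('a \<times> 's msg) set \<Rightarrow> 's msg \<Rightarrow> bool" where
  "cert Qs V M \<longleftrightarrow> (\<exists>Q\<in>Qs. \<forall>a\<in>Q. (a, M) \<in> V)"

definition safe_precommit :: "'s proposal option \<Rightarrow> 's proposal option \<Rightarrow> 's proposal \<Rightarrow> bool" where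
  "safe_precommit prop lck P \<longleftrightarrow>
     (\<forall>P0. prop = Some P0 \<longrightarrow> P \<noteq> P0 \<longrightarrow> round P > round P0) \<and>
     (\<forall>C0. lck = Some C0 \<longrightarrow> round P > round C0 \<and> decision P = decision C0)"

definition safe_commit :: "'s proposal option \<Rightarrow> 's proposal option \<Rightarrow> 's proposal \<Rightarrow> bool" where
  "safe_commit prop lck P \<longleftrightarrow>
     (\<forall>P0. prop = Some P0 \<longrightarrow> round P \<ge> round P0) \<and>
     (\<forall>C0. lck = Some C0 \<longrightarrow> round P \<ge> round C0)"

inductive reachable :: "'a set set \<Rightarrow> 'a set \<Rightarrow> 's \<Rightarrow> ('a, 's) state \<Rightarrow> bool"
  for Qs :: "'a set set" and Honest :: "'a set" and sw :: 's where
  init: "reachable Qs Honest sw \<lparr>votes = {}, proposed = (\<lambda>_. None), locked = (\<lambda>_. None)\<rparr>"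
| byz: "reachable Qs Honest sw s \<Longrightarrow> a \<notin> Honest \<Longrightarrow>
        reachable Qs Honest sw (s\<lparr>votes := insert (a, m) (votes s)\<rparr>)"
| precommit: "reachable Qs Honest sw s \<Longrightarrow> a \<in> Honest \<Longrightarrow> swid P = sw \<Longrightarrow>
        safe_precommit (proposed s a) (locked s a) P \<Longrightarrow>
        reachable Qs Honest sw (s\<lparr>votes := insert (a, PreCommit P) (votes s),
                                  proposed := (proposed s)(a := Some P)\<rparr>)"
| commit: "reachable Qs Honest sw s \<Longrightarrow> a \<in> Honest \<Longrightarrow> swid P = sw \<Longrightarrow>
        cert Qs (votes s) (PreCommit P) \<Longrightarrow>
        safe_commit (proposed s a) (locked s a) P \<Longrightarrow>
        reachable Qs Honest sw (s\<lparr>votes := insert (a, Commit P) (votes s),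
                                  locked := (locked s)(a := Some P)\<rparr>)"

end

theory Submission
  imports Defs
begin

text \<open>Each honest authority maintains simple per-authority invariants: its pre-commit votes
  lie below its current proposal (so it pre-commits at most one proposal per round), and every
  commit vote is backed by a pre-commit certificate and by its lock.  Consequently, once an honest
  authority has committed P1, any later pre-commit vote of it is justified by a pre-commit
  certificate of a round in between with the same decision.  Given a commit certificate for P1,
  every pre-commit certificate of round at least round P1 shares an honest signer with it, so by
  strong induction on the round its decision is that of P1; two commit certificates then
  carry pre-commit certificates and agree.\<close>

lemma cert_insert: "cert Qs V M \<Longrightarrow> cert Qs (insert v V) M"
  unfolding cert_def by blast

lemma precommit_vote_below_proposed:
  assumes "reachable Qs Honest sw s" and "a \<in> Honest" and "(a, PreCommit P) \<in> votes s"
  shows "\<exists>P0. proposed s a = Some P0 \<and> (P = P0 \<or> round P < round P0)"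
  using assms
proof (induction arbitrary: P rule: reachable.induct)
  case (precommit s b P')
  then show ?case
    by (cases "a = b"; cases "P = P'") (auto simp: safe_precommit_def, force)
qed auto

lemma precommit_votes_unique_per_round:
  assumes "reachable Qs Honest sw s" and "a \<in> Honest"
    and "(a, PreCommit P) \<in> votes s" and "(a, PreCommit P') \<in> votes s"
    and "round P = round P'"
  shows "P = P'"
  using assms
proof (induction arbitrary: P P' rule: reachable.induct)
  case (byz s b m)
  then show ?case by (cases "a = b") auto
next
  case (precommit s b Pnew)
  have old_equals_new: "X = Pnew"
    if "a = b" and X: "(a, PreCommit X) \<in> votes s" "round X = round Pnew" for X
  proof -
    obtain P0 where P0: "proposed s a = Some P0" "X = P0 \<or> round X < round P0"
      using precommit_vote_below_proposed[OF precommit.hyps(1) precommit.prems(1) X(1)] by blast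
    with precommit.hyps(4) \<open>a = b\<close> have "Pnew \<noteq> P0 \<Longrightarrow> round P0 < round Pnew"
      unfolding safe_precommit_def by simp
    with P0(2) X(2) show ?thesis by (cases "Pnew = P0") auto
  qed
  consider "a = b" "P = Pnew" "P' = Pnew"
    | "a = b" "P = Pnew" "(a, PreCommit P') \<in> votes s"
    | "a = b" "P' = Pnew" "(a, PreCommit P) \<in> votes s"
    | "(a, PreCommit P) \<in> votes s" "(a, PreCommit P') \<in> votes s"
    using precommit.prems(2,3) by auto
  then show ?case
    using old_equals_new precommit.IH precommit.prems(1,4) by cases metis+
next
  case (commit s b Pnew)
  then show ?case by simp
qed simp

lemma commit_vote_certified:
  assumes "reachable Qs Honest sw s" and "a \<in> Honest" and "(a, Commit P) \<in> votes s"
  shows "cert Qs (votes s) (PreCommit P)"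
  using assms
  by (induction arbitrary: P rule: reachable.induct) (auto intro: cert_insert)

lemma commit_vote_below_locked:
  assumes "reachable Qs Honest sw s" and "a \<in> Honest" and "(a, Commit P) \<in> votes s"
  shows "\<exists>C. locked s a = Some C \<and> round P \<le> round C \<and> cert Qs (votes s) (PreCommit C)"
  using assms
proof (induction arbitrary: P rule: reachable.induct)
  case (commit s b P')
  show ?case
  proof (cases "a = b \<and> P = P'")
    case True
    with commit show ?thesis by (auto intro: cert_insert)
  next
    case False
    with commit.prems have "(a, Commit P) \<in> votes s" by auto
    then obtain C where C: "locked s a = Some C" "round P \<le> round C" "cert Qs (votes s) (PreCommit C)"
      using commit.IH commit.prems(1) by blast
    show ?thesis
    proof (cases "a = b")
      case True
      with C commit.hyps(5) have "round P \<le> round P'"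
        unfolding safe_commit_def by auto
      with True commit.hyps(4) show ?thesis by (auto intro: cert_insert)
    next
      case False
      with C show ?thesis by (auto intro: cert_insert)
    qed
  qed
qed (auto intro: cert_insert)

definition respects_lock :: "'a set set \<Rightarrow> ('a \<times> 's msg) set \<Rightarrow> 's proposal \<Rightarrow> 's proposal \<Rightarrow> bool" where
  "respects_lock Qs V P1 P \<longleftrightarrow> round P \<le> round P1 \<or>
     (\<exists>C. round P1 \<le> round C \<and> round C < round P \<and> decision C = decision P \<and>
          cert Qs V (PreCommit C))"

lemma respects_lock_insert: "respects_lock Qs V P1 P \<Longrightarrow> respects_lock Qs (insert v V) P1 P"
  unfolding respects_lock_def by (blast intro: cert_insert)

lemma precommit_vote_respects_commit_lock:
  assumes "reachable Qs Honest sw s" and "a \<in> Honest"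
    and "(a, Commit P1) \<in> votes s" and "(a, PreCommit P) \<in> votes s"
  shows "respects_lock Qs (votes s) P1 P"
  using assms
proof (induction arbitrary: P1 P rule: reachable.induct)
  case (byz s b m)
  then have "respects_lock Qs (votes s) P1 P" by (cases "a = b") auto
  then show ?case by (simp add: respects_lock_insert)
next
  case (precommit s b Pnew)
  show ?case
  proof (cases "a = b \<and> P = Pnew")
    case True
    with precommit.prems have "(a, Commit P1) \<in> votes s" by simp
    then obtain C where C: "locked s a = Some C" "round P1 \<le> round C" "cert Qs (votes s) (PreCommit C)"
      using commit_vote_below_locked[OF precommit.hyps(1) precommit.prems(1)] by blast
    with True precommit.hyps(4) have "round C < round P" "decision C = decision P"
      unfolding safe_precommit_def by simp_all
    with C show ?thesis
      unfolding respects_lock_def by (auto intro: cert_insert)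
  next
    case False
    with precommit.prems have "(a, Commit P1) \<in> votes s" "(a, PreCommit P) \<in> votes s" by auto
    then show ?thesis using precommit.IH precommit.prems(1) by (simp add: respects_lock_insert)
  qed
next
  case (commit s b Pnew)
  show ?case
  proof (cases "a = b \<and> P1 = Pnew")
    case True
    with commit.prems have "(a, PreCommit P) \<in> votes s" by simp
    then obtain P0 where "proposed s a = Some P0" "P = P0 \<or> round P < round P0"
      using precommit_vote_below_proposed[OF commit.hyps(1) commit.prems(1)] by blast
    with True commit.hyps(5) have "round P \<le> round P1"
      unfolding safe_commit_def by auto
    then show ?thesis unfolding respects_lock_def by simp
  next
    case False
    with commit.prems have "(a, Commit P1) \<in> votes s" "(a, PreCommit P) \<in> votes s" by auto
    then show ?thesis using commit.IH commit.prems(1) by (simp add: respects_lock_insert)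
  qed
qed simp

lemma certs_share_honest_signer:
  assumes "\<forall>Q1\<in>Qs. \<forall>Q2\<in>Qs. \<exists>a\<in>Q1 \<inter> Q2. a \<in> Honest"
    and "cert Qs V M1" and "cert Qs V M2"
  shows "\<exists>a\<in>Honest. (a, M1) \<in> V \<and> (a, M2) \<in> V"
  using assms unfolding cert_def by blast

lemma commit_cert_implies_precommit_cert:
  assumes "reachable Qs Honest sw s"
    and "\<forall>Q1\<in>Qs. \<forall>Q2\<in>Qs. \<exists>a\<in>Q1 \<inter> Q2. a \<in> Honest"
    and "cert Qs (votes s) (Commit P)"
  shows "cert Qs (votes s) (PreCommit P)"
  using certs_share_honest_signer[OF assms(2,3,3)] commit_vote_certified[OF assms(1)] by blast

lemma precommit_certs_unique_per_round:
  assumes "reachable Qs Honest sw s"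
    and "\<forall>Q1\<in>Qs. \<forall>Q2\<in>Qs. \<exists>a\<in>Q1 \<inter> Q2. a \<in> Honest"
    and "cert Qs (votes s) (PreCommit P)" and "cert Qs (votes s) (PreCommit P')"
    and "round P = round P'"
  shows "P = P'"
  using certs_share_honest_signer[OF assms(2-4)] precommit_votes_unique_per_round[OF assms(1)] assms(5)
  by blast

lemma commit_cert_fixes_later_decisions:
  assumes reach: "reachable Qs Honest sw s"
    and quorums: "\<forall>Q1\<in>Qs. \<forall>Q2\<in>Qs. \<exists>a\<in>Q1 \<inter> Q2. a \<in> Honest"
    and committed: "cert Qs (votes s) (Commit P1)"
    and "cert Qs (votes s) (PreCommit P)" and "round P1 \<le> round P"
  shows "decision P = decision P1"
  using assms(4,5)
proof (induction "round P" arbitrary: P rule: less_induct)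
  case less
  obtain a where "a \<in> Honest" "(a, Commit P1) \<in> votes s" "(a, PreCommit P) \<in> votes s"
    using certs_share_honest_signer[OF quorums committed less.prems(1)] by blast
  then have "respects_lock Qs (votes s) P1 P"
    using precommit_vote_respects_commit_lock[OF reach] by blast
  then consider "round P = round P1"
    | C where "round P1 \<le> round C" "round C < round P" "decision C = decision P"
        "cert Qs (votes s) (PreCommit C)"
    using less.prems(2) unfolding respects_lock_def by fastforce
  then show ?case
  proof cases
    case 1
    then show ?thesis
      using precommit_certs_unique_per_round[OF reach quorums less.prems(1)]
        commit_cert_implies_precommit_cert[OF reach quorums committed] by metis
  next
    case (2 C)
    then show ?thesis using less.hyps by metis
  qed
qed

theorem mainTheorem2:
  fixes Auth Honest :: "'a set" and Qs :: "'a set set" and qsize :: nat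
    and sw :: 's and s :: "('a, 's) state" and P1 P2 :: "'s proposal"
  assumes "finite Auth" and "Honest \<subseteq> Auth"
    and "\<forall>Q\<in>Qs. Q \<subseteq> Auth \<and> card Q = qsize"
    and "\<forall>Q1\<in>Qs. \<forall>Q2\<in>Qs. \<exists>a\<in>Q1 \<inter> Q2. a \<in> Honest"
    and "reachable Qs Honest sw s"
    and "swid P1 = sw" and "swid P2 = sw"
    and "cert Qs (votes s) (Commit P1)" and "cert Qs (votes s) (Commit P2)"
  shows "decision P1 = decision P2"
proof (cases "round P1 \<le> round P2")
  case True
  then show ?thesis
    using commit_cert_fixes_later_decisions[OF assms(5,4,8)]
      commit_cert_implies_precommit_cert[OF assms(5,4,9)] by simp
next
  case False
  then show ?thesis
    using commit_cert_fixes_later_decisions[OF assms(5,4,9)]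
      commit_cert_implies_precommit_cert[OF assms(5,4,8)] by simp
qed

end
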